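(* The number of bars of a barcode $f$, which equals $n = f|_{(x,y)=(1,1)}$, can be determined from $C^{\wedge}(f)$: if $f, f'$ are barcodes with $C^{\wedge}(f) = C^{\wedge}(f')$, then $f$ and $f'$ have the same number of bars.
   Context: A barcode is a finite formal sum $f = \sum_{i=1}^n x^{\alpha_i}y^{\ell_i}$ with $n\ge 0$, $\alpha_i \in \mathbb{R}$, $\ell_i \in \mathbb{R}_{>0}$ (a finite multiset of bars $x^{\alpha_i}y^{\ell_i}$); its number of bars is $n$. Its $p$-th exterior power ($p\ge1$) is $f^{\wedge p} = \sum_{1\le i_1<\cdots<i_p\le n} x^{\alpha_{i_1}+\cdots+\alpha_{i_p}}y^{\min\{\ell_{i_1},\ldots,\ell_{i_p}\}}$ (zero if $p>n$). Set $C(f) = \sum_i x^{\alpha_i} - \sum_i x^{\alpha_i+\ell_i}$, a finite integer combination of symbols $x^g$, $g\in\mathbb{R}$, and $C^{\wedge}(f) = \sum_{p\ge1} C(f^{\wedge p})z^p$ with $z$ an indeterminate. *)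

theory Defs
  imports Complex_Main "HOL-Library.Multiset"
begin

text \<open>A barcode is a finite list of bars (alpha, ell), bar = x^alpha y^ell, with ell > 0.
  The list order is irrelevant; a list is used so that the exterior power can range over
  index sets i_1 < ... < i_p.\<close>

type_synonym bar = "real \<times> real"

definition is_barcode :: "bar list \<Rightarrow> bool" where
  "is_barcode f \<longleftrightarrow> (\<forall>b \<in> set f. snd b > 0)"

definition num_bars :: "bar list \<Rightarrow> nat" where
  "num_bars f = length f"

definition ext_pow :: "bar list \<Rightarrow> nat \<Rightarrow> bar multiset" where
  "ext_pow f p = image_mset
     (\<lambda>S. (\<Sum>i\<in>S. fst (f ! i), Min ((\<lambda>i. snd (f ! i)) ` S)))
     (mset_set {S. S \<subseteq> {..<length f} \<and> card S = p})"

text \<open>C of a multiset of bars: the integer combination sum x^alpha - sum x^(alpha+ell),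
  represented by its coefficient function g \<mapsto> coefficient of x^g.\<close>
definition C :: "bar multiset \<Rightarrow> real \<Rightarrow> int" where
  "C M g = int (count (image_mset fst M) g)
         - int (count (image_mset (\<lambda>(a, l). a + l) M) g)"

text \<open>C^wedge(f) = sum_{p>=1} C(f^{wedge p}) z^p, represented by its coefficient sequence
  (coefficient at p = 0 is 0).\<close>
definition C_wedge :: "bar list \<Rightarrow> nat \<Rightarrow> real \<Rightarrow> int" where
  "C_wedge f p = (if p \<ge> 1 then C (ext_pow f p) else (\<lambda>_. 0))"

end

theory Submission
  imports Defs
begin

text \<open>The top exterior power \<open>f\<^sup>\<and>\<^sup>n\<close> of a barcode with \<open>n\<close> bars is a single bar of
  positive length, so its \<open>C\<close> is nonzero, while all higher exterior powers vanish.
  Hence \<open>n\<close> is the largest \<open>p\<close> with a nonzero coefficient of \<open>z\<^sup>p\<close> in \<open>C\<^sup>\<and>(f)\<close>.\<close>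

lemma ext_pow_eq_empty:
  assumes "length f < p"
  shows "ext_pow f p = {#}"
proof -
  have "{S. S \<subseteq> {..<length f} \<and> card S = p} = {}"
  proof (rule equals0I)
    fix S
    assume "S \<in> {S. S \<subseteq> {..<length f} \<and> card S = p}"
    then have "S \<subseteq> {..<length f}" and "card S = p"
      by auto
    with card_mono[of "{..<length f}" S] assms show False
      by simp
  qed
  then show ?thesis
    unfolding ext_pow_def by (simp only: mset_set.empty image_mset_empty)
qed

lemma ext_pow_length:
  "ext_pow f (length f) =
     {#(\<Sum>i<length f. fst (f ! i), Min ((\<lambda>i. snd (f ! i)) ` {..<length f}))#}"
proof -
  have "{S. S \<subseteq> {..<length f} \<and> card S = length f} = {{..<length f}}"
    using card_subset_eq[of "{..<length f}"] by auto
  then show ?thesis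
    unfolding ext_pow_def by simp
qed

lemma C_empty: "C {#} = (\<lambda>_. 0)"
  unfolding C_def by simp

lemma C_single_bar_neq_zero:
  assumes "l \<noteq> 0"
  shows "C {#(a, l)#} \<noteq> (\<lambda>_. 0)"
proof -
  have "C {#(a, l)#} a = 1"
    using assms by (simp add: C_def)
  then show ?thesis
    by (auto dest: fun_cong[where x = a])
qed

lemma is_barcode_Min_length_pos:
  assumes "is_barcode f" "f \<noteq> []"
  shows "Min ((\<lambda>i. snd (f ! i)) ` {..<length f}) > 0"
  using assms by (subst Min_gr_iff) (auto simp: is_barcode_def)

lemma C_wedge_eq_zero:
  assumes "length f < p"
  shows "C_wedge f p = (\<lambda>_. 0)"
  by (simp add: C_wedge_def ext_pow_eq_empty[OF assms] C_empty)

lemma C_wedge_length_neq_zero: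
  assumes "is_barcode f" "f \<noteq> []"
  shows "C_wedge f (length f) \<noteq> (\<lambda>_. 0)"
proof -
  have "length f \<ge> 1"
    using assms(2) by (simp add: Suc_le_eq)
  then have "C_wedge f (length f) = C (ext_pow f (length f))"
    by (simp add: C_wedge_def)
  moreover have "Min ((\<lambda>i. snd (f ! i)) ` {..<length f}) \<noteq> 0"
    using is_barcode_Min_length_pos[OF assms] by simp
  ultimately show ?thesis
    unfolding ext_pow_length using C_single_bar_neq_zero by simp
qed

lemma length_le_if_C_wedge_eq:
  assumes "is_barcode f'" "C_wedge f = C_wedge f'"
  shows "length f' \<le> length f"
proof (rule ccontr)
  assume "\<not> length f' \<le> length f"
  then have "C_wedge f' (length f') = (\<lambda>_. 0)" and "f' \<noteq> []"
    using C_wedge_eq_zero[of f "length f'"] assms(2) by auto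
  with C_wedge_length_neq_zero[OF assms(1)] show False
    by blast
qed

theorem proposition8:
  fixes f f' :: "bar list"
  assumes "is_barcode f" and "is_barcode f'"
    and "C_wedge f = C_wedge f'"
  shows "num_bars f = num_bars f'"
  using length_le_if_C_wedge_eq[OF assms(2,3)]
    length_le_if_C_wedge_eq[OF assms(1) assms(3)[symmetric]]
  by (simp add: num_bars_def)

end
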